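(* Let $N_1, N_2$ be positive integers. Let $Z\sim \operatorname{Beta}(N_1 + 1, N_2)$, $B_1 \sim \operatorname{Beta}(N_1, 1)$ and $B_2 \sim \operatorname{Beta}(1, N_2)$ be independent random variables. Then $B_1 (1 - B_2) Z + B_2 \sim \operatorname{Beta}(N_1 + 1, N_2)$. Consequently, $\operatorname{Beta}(N_1+1, N_2)$ is a stationary distribution of the Markov chain on $[0,1]$ defined by $Z^{(t)} = B_1^{(t)} (1 - B_2^{(t)}) Z^{(t-1)} + B_2^{(t)}$, where $B_1^{(t)} \sim \operatorname{Beta}(N_1,1)$ and $B_2^{(t)}\sim\operatorname{Beta}(1,N_2)$, $t=1,2,\dots$, are all mutually independent and independent of $Z^{(0)}$.
   Context: $\operatorname{Beta}(a,b)$ denotes the Beta distribution on $[0,1]$ with density proportional to $x^{a-1}(1-x)^{b-1}$. *)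

theory Defs
  imports "HOL-Probability.Probability"
begin

definition beta_density :: "real \<Rightarrow> real \<Rightarrow> real \<Rightarrow> real" where
  "beta_density a b x =
     (if 0 < x \<and> x < 1 then x powr (a - 1) * (1 - x) powr (b - 1) / Beta a b else 0)"

text \<open>Index type for the family of random variables driving the Markov chain.\<close>
datatype chain_idx = Init | Step1 nat | Step2 nat

primrec beta_chain ::
  "('a \<Rightarrow> real) \<Rightarrow> (nat \<Rightarrow> 'a \<Rightarrow> real) \<Rightarrow> (nat \<Rightarrow> 'a \<Rightarrow> real) \<Rightarrow> nat \<Rightarrow> 'a \<Rightarrow> real" where
  "beta_chain Z0 B1 B2 0 = Z0"
| "beta_chain Z0 B1 B2 (Suc t) =
     (\<lambda>\<omega>. B1 (Suc t) \<omega> * (1 - B2 (Suc t) \<omega>) * beta_chain Z0 B1 B2 t \<omega> + B2 (Suc t) \<omega>)"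

end

theory Submission
  imports Defs
begin

text \<open>
  If U ~ Beta(a, 1) and V ~ Beta(a + 1, c) are independent, then U V ~ Beta(a, c + 1): by the
  density formula for a product, U V has density a s^(a-1) / B(a+1, c) times the integral of
  (1 - v)^(c-1) over [s, 1] at s, and c B(a+1, c) = a B(a, c+1).  Since moreover
  1 - Beta(a, b) ~ Beta(b, a) and B1 (1 - B2) Z + B2 = 1 - (1 - B2) (1 - B1 Z), one gets in turn
  B1 Z ~ Beta(N1, N2+1), 1 - B1 Z ~ Beta(N2+1, N1), (1 - B2) (1 - B1 Z) ~ Beta(N2, N1+1), and
  the claim.  For the chain, Z^(t) is a measurable function of Z^(0) and of the B's with index
  at most t, hence independent of B1^(t+1) and B2^(t+1), and induction on t applies.
\<close>

lemma Beta_real_pos: "0 < a \<Longrightarrow> 0 < b \<Longrightarrow> 0 < Beta a (b :: real)"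
  by (simp add: Beta_def)

lemma Beta_1_right:
  fixes a :: real
  assumes "0 < a"
  shows "Beta a 1 = 1 / a"
proof -
  have "a \<notin> \<int>\<^sub>\<le>\<^sub>0"
    using assms by (auto elim!: nonpos_Ints_cases)
  then show ?thesis
    using Gamma_real_pos[OF assms] by (simp add: Beta_def Gamma_plus1)
qed

lemma Beta_plus1_swap:
  fixes a c :: real
  assumes "0 < a" "0 < c"
  shows "c * Beta (a + 1) c = a * Beta a (c + 1)"
proof -
  have "a \<notin> \<int>\<^sub>\<le>\<^sub>0" "c \<notin> \<int>\<^sub>\<le>\<^sub>0"
    using assms by (auto elim!: nonpos_Ints_cases)
  then have "Gamma (a + 1) = a * Gamma a" "Gamma (c + 1) = c * Gamma c"
    by (simp_all add: Gamma_plus1)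
  moreover have "Gamma (a + 1 + c) = Gamma (a + (c + 1))"
    by (simp add: ac_simps)
  ultimately show ?thesis
    unfolding Beta_def by (simp add: ac_simps)
qed

lemma beta_density_nonneg: "0 < a \<Longrightarrow> 0 < b \<Longrightarrow> 0 \<le> beta_density a b x"
  by (simp add: beta_density_def Beta_real_pos less_imp_le)

lemma beta_density_one_minus: "beta_density a b (1 - x) = beta_density b a x"
  by (auto simp: beta_density_def Beta_commute)

lemma has_integral_one_minus_powr:
  fixes c s :: real
  assumes "0 < c" "s \<le> 1"
  shows "((\<lambda>v. (1 - v) powr (c - 1)) has_integral (1 - s) powr c / c) {s..1}"
proof -
  have "((\<lambda>v. (1 - v) powr (c - 1)) has_integral
          (- ((1 - 1) powr c / c)) - (- ((1 - s) powr c / c))) {s..1}"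
  proof (rule fundamental_theorem_of_calculus_interior)
    show "continuous_on {s..1} (\<lambda>v. - ((1 - v) powr c / c))"
      using assms by (intro continuous_intros continuous_on_powr') auto
    show "((\<lambda>v. - ((1 - v) powr c / c)) has_vector_derivative (1 - v) powr (c - 1)) (at v)"
      if "v \<in> {s<..<1}" for v
      using that assms
      by (auto intro!: derivative_eq_intros
               simp flip: has_real_derivative_iff_has_vector_derivative simp: powr_diff)
  qed (use assms in auto)
  then show ?thesis
    by simp
qed

lemma beta_density_mult_kernel:
  fixes a c s v :: real
  assumes "0 < a" "0 < c" "0 < s"
  shows "beta_density a 1 (s / v) * beta_density (a + 1) c v * (1 / \<bar>v\<bar>) =
         indicator {s<..<1} v * (a * s powr (a - 1) / Beta (a + 1) c * (1 - v) powr (c - 1))"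
proof (cases "s < v \<and> v < 1")
  case True
  then have v: "0 < v" and sv: "0 < s / v" "s / v < 1"
    using assms by (auto simp: field_simps)
  have "beta_density a 1 (s / v) = a * (s powr (a - 1) / v powr (a - 1))"
    using sv True assms by (simp add: beta_density_def Beta_1_right powr_divide)
  moreover have "beta_density (a + 1) c v = v * v powr (a - 1) * (1 - v) powr (c - 1) / Beta (a + 1) c"
    using v True by (simp add: beta_density_def powr_mult_base)
  ultimately show ?thesis
    using True v by simp
next
  case False
  then have "beta_density a 1 (s / v) * beta_density (a + 1) c v = 0"
    using assms by (auto simp: beta_density_def divide_less_eq_1)
  then show ?thesis
    using False by simp
qed

lemma beta_density_mult_integral:
  fixes a c s :: real
  assumes a: "0 < a" and c: "0 < c"
  shows "(\<integral>\<^sup>+v. ennreal (beta_density a 1 (s / v)) * ennreal (beta_density (a + 1) c v) *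
             ennreal (1 / \<bar>v\<bar>) \<partial>lborel) = ennreal (beta_density a (c + 1) s)"
proof -
  have integrand: "ennreal (beta_density a 1 (s / v)) * ennreal (beta_density (a + 1) c v) *
      ennreal (1 / \<bar>v\<bar>) = ennreal (beta_density a 1 (s / v) * beta_density (a + 1) c v * (1 / \<bar>v\<bar>))"
    for v
  proof -
    have "0 \<le> beta_density a 1 (s / v)" "0 \<le> beta_density (a + 1) c v" "0 \<le> 1 / \<bar>v\<bar>"
      using assms by (simp_all add: beta_density_nonneg)
    then show ?thesis
      by (simp only: ennreal_mult mult_nonneg_nonneg)
  qed
  show ?thesis
  proof (cases "0 < s \<and> s < 1")
    case False
    then have zero: "beta_density a 1 (s / v) * beta_density (a + 1) c v = 0" for v
      by (auto simp: beta_density_def divide_less_eq_1 zero_less_divide_iff)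
    have "beta_density a (c + 1) s = 0"
      using False by (auto simp: beta_density_def)
    then show ?thesis
      unfolding integrand zero by simp
  next
    case True
    define C where "C = a * s powr (a - 1) / Beta (a + 1) c"
    have "0 \<le> C"
      using assms Beta_real_pos[of "a + 1" c] by (simp add: C_def)
    have integral: "((\<lambda>v. C * (1 - v) powr (c - 1)) has_integral C * ((1 - s) powr c / c)) {s<..<1}"
      using has_integral_mult_right[OF has_integral_one_minus_powr[OF c, of s]] True
      by (simp add: has_integral_open_interval[of _ _ s 1, simplified])
    have pointwise: "ennreal (beta_density a 1 (s / v)) * ennreal (beta_density (a + 1) c v) *
        ennreal (1 / \<bar>v\<bar>) = ennreal (C * (1 - v) powr (c - 1)) * indicator {s<..<1} v" for v
      unfolding integrand beta_density_mult_kernel[OF a c True[THEN conjunct1]] C_def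
      by (simp split: split_indicator)
    have "(\<integral>\<^sup>+v. ennreal (beta_density a 1 (s / v)) * ennreal (beta_density (a + 1) c v) *
        ennreal (1 / \<bar>v\<bar>) \<partial>lborel) =
        (\<integral>\<^sup>+v. ennreal (C * (1 - v) powr (c - 1)) * indicator {s<..<1} v \<partial>lborel)"
      by (simp only: pointwise)
    also have "\<dots> = ennreal (C * ((1 - s) powr c / c))"
      using \<open>0 \<le> C\<close> by (intro nn_integral_has_integral_lebesgue'[OF _ integral]) simp
    also have "\<dots> = ennreal (beta_density a (c + 1) s)"
      using True assms Beta_plus1_swap[OF a c] Beta_real_pos[of a "c + 1"]
      by (simp add: C_def beta_density_def field_simps)
    finally show ?thesis .
  qed
qed

lemma distributed_one_minus:
  fixes X :: "'a \<Rightarrow> real"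
  assumes X: "distributed M lborel X f"
  shows "distributed M lborel (\<lambda>\<omega>. 1 - X \<omega>) (\<lambda>x. f (1 - x))"
proof -
  have [measurable]: "X \<in> borel_measurable M" "f \<in> borel_measurable borel"
    using distributed_measurable[OF X] distributed_borel_measurable[OF X] by simp_all
  have reflect: "lborel = distr lborel lborel (\<lambda>x::real. 1 - x)"
    using lborel_real_affine[of "-1" 1] by (simp add: density_1 cong: distr_cong)
  have "distr M lborel (\<lambda>\<omega>. 1 - X \<omega>) = distr (density lborel f) lborel (\<lambda>x. 1 - x)"
    unfolding distributed_distr_eq_density[OF X, symmetric] by (subst distr_distr) (auto simp: comp_def)
  also have "\<dots> = density lborel (\<lambda>x. f (1 - x))"
    by (subst (1) reflect) (simp add: distr_density_distr comp_def)
  finally show ?thesis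
    by (simp add: distributed_def)
qed

lemma distr_mult_density_pair:
  fixes f g :: "real \<Rightarrow> ennreal"
  assumes [measurable]: "f \<in> borel_measurable borel" "g \<in> borel_measurable borel"
  shows "distr (density (lborel \<Otimes>\<^sub>M lborel) (\<lambda>(x, y). f x * g y)) lborel (\<lambda>(x, y). x * y) =
    density lborel (\<lambda>s. \<integral>\<^sup>+y. f (s / y) * g y * ennreal (1 / \<bar>y\<bar>) \<partial>lborel)"
    (is "?l = ?r")
proof (rule measure_eqI)
  fix A assume "A \<in> sets ?l"
  then have [measurable]: "A \<in> sets borel"
    by simp
  have "emeasure ?l A =
      (\<integral>\<^sup>+p. f (fst p) * g (snd p) * indicator A (fst p * snd p) \<partial>(lborel \<Otimes>\<^sub>M lborel))"
    using measurable_sets[of "\<lambda>(x, y). x * y" "lborel \<Otimes>\<^sub>M lborel" lborel A]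
    by (subst emeasure_distr, simp, simp, subst emeasure_density)
       (auto intro!: nn_integral_cong split: split_indicator)
  also have "\<dots> = (\<integral>\<^sup>+y. \<integral>\<^sup>+x. f x * g y * indicator A (x * y) \<partial>lborel \<partial>lborel)"
    by (subst lborel_pair.nn_integral_snd[symmetric]) simp_all
  also have "\<dots> = (\<integral>\<^sup>+y. \<integral>\<^sup>+s. f (s / y) * g y * ennreal (1 / \<bar>y\<bar>) * indicator A s \<partial>lborel \<partial>lborel)"
  proof (intro nn_integral_cong_AE, use AE_lborel_singleton[of 0] in eventually_elim)
    fix y :: real assume "y \<noteq> 0"
    then have "(\<integral>\<^sup>+x. f x * g y * indicator A (x * y) \<partial>lborel) =
        ennreal (1 / \<bar>y\<bar>) * (\<integral>\<^sup>+s. f (s / y) * g y * indicator A s \<partial>lborel)"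
      by (subst nn_integral_real_affine[where c = "1 / y" and t = 0]) auto
    also have "\<dots> = (\<integral>\<^sup>+s. f (s / y) * g y * ennreal (1 / \<bar>y\<bar>) * indicator A s \<partial>lborel)"
      by (subst nn_integral_cmult[symmetric]) (auto simp: ac_simps)
    finally show "(\<integral>\<^sup>+x. f x * g y * indicator A (x * y) \<partial>lborel) =
        (\<integral>\<^sup>+s. f (s / y) * g y * ennreal (1 / \<bar>y\<bar>) * indicator A s \<partial>lborel)" .
  qed
  also have "\<dots> = (\<integral>\<^sup>+s. \<integral>\<^sup>+y. f (s / y) * g y * ennreal (1 / \<bar>y\<bar>) * indicator A s \<partial>lborel \<partial>lborel)"
    by (rule lborel_pair.Fubini') measurable
  also have "\<dots> = emeasure ?r A"
    by (simp add: emeasure_density nn_integral_multc)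
  finally show "emeasure ?l A = emeasure ?r A" .
qed simp

lemma (in prob_space) distributed_mult:
  fixes X Y :: "'a \<Rightarrow> real"
  assumes indep: "indep_var borel X borel Y"
    and X: "distributed M lborel X f" and Y: "distributed M lborel Y g"
  shows "distributed M lborel (\<lambda>\<omega>. X \<omega> * Y \<omega>)
           (\<lambda>s. \<integral>\<^sup>+y. f (s / y) * g y * ennreal (1 / \<bar>y\<bar>) \<partial>lborel)"
  unfolding distributed_def
proof safe
  have [measurable]: "X \<in> borel_measurable M" "Y \<in> borel_measurable M"
      "f \<in> borel_measurable borel" "g \<in> borel_measurable borel"
    using X Y by (simp_all add: distributed_def)
  show "(\<lambda>s. \<integral>\<^sup>+y. f (s / y) * g y * ennreal (1 / \<bar>y\<bar>) \<partial>lborel) \<in> borel_measurable lborel"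
    by measurable
  show "(\<lambda>\<omega>. X \<omega> * Y \<omega>) \<in> measurable M lborel"
    by simp
  have "indep_var lborel X lborel Y"
    using indep by (simp add: indep_var_eq)
  then have joint: "distr M (lborel \<Otimes>\<^sub>M lborel) (\<lambda>\<omega>. (X \<omega>, Y \<omega>)) =
      density (lborel \<Otimes>\<^sub>M lborel) (\<lambda>(x, y). f x * g y)"
    using distributed_joint_indep[OF _ _ X Y] by (simp add: distributed_def lborel.sigma_finite_measure_axioms)
  have "distr M lborel (\<lambda>\<omega>. X \<omega> * Y \<omega>) =
      distr (density (lborel \<Otimes>\<^sub>M lborel) (\<lambda>(x, y). f x * g y)) lborel (\<lambda>(x, y). x * y)"
    unfolding joint[symmetric] by (subst distr_distr) (auto simp: comp_def)
  then show "distr M lborel (\<lambda>\<omega>. X \<omega> * Y \<omega>) =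
      density lborel (\<lambda>s. \<integral>\<^sup>+y. f (s / y) * g y * ennreal (1 / \<bar>y\<bar>) \<partial>lborel)"
    by (simp add: distr_mult_density_pair)
qed

lemma distributed_beta_one_minus:
  assumes "distributed M lborel X (\<lambda>x. ennreal (beta_density a b x))"
  shows "distributed M lborel (\<lambda>\<omega>. 1 - X \<omega>) (\<lambda>x. ennreal (beta_density b a x))"
  using distributed_one_minus[OF assms] by (simp add: beta_density_one_minus)

lemma (in prob_space) distributed_beta_mult:
  fixes a c :: real
  assumes "0 < a" "0 < c"
    and "indep_var borel U borel V"
    and "distributed M lborel U (\<lambda>x. ennreal (beta_density a 1 x))"
    and "distributed M lborel V (\<lambda>x. ennreal (beta_density (a + 1) c x))"
  shows "distributed M lborel (\<lambda>\<omega>. U \<omega> * V \<omega>) (\<lambda>x. ennreal (beta_density a (c + 1) x))"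
  using distributed_mult[OF assms(3-5)] beta_density_mult_integral[OF assms(1,2)] by simp

lemma (in prob_space) distributed_beta_step:
  fixes a b :: real
  assumes a: "0 < a" and b: "0 < b"
    and Z: "distributed M lborel Z (\<lambda>x. ennreal (beta_density (a + 1) b x))"
    and B1: "distributed M lborel B1 (\<lambda>x. ennreal (beta_density a 1 x))"
    and B2: "distributed M lborel B2 (\<lambda>x. ennreal (beta_density 1 b x))"
    and indep1: "indep_var borel B1 borel Z"
    and indep2: "indep_var borel B2 borel (\<lambda>\<omega>. B1 \<omega> * Z \<omega>)"
  shows "distributed M lborel (\<lambda>\<omega>. B1 \<omega> * (1 - B2 \<omega>) * Z \<omega> + B2 \<omega>)
           (\<lambda>x. ennreal (beta_density (a + 1) b x))"
proof -
  have "distributed M lborel (\<lambda>\<omega>. B1 \<omega> * Z \<omega>) (\<lambda>x. ennreal (beta_density a (b + 1) x))"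
    using distributed_beta_mult[OF a b indep1 B1 Z] .
  then have W: "distributed M lborel (\<lambda>\<omega>. 1 - B1 \<omega> * Z \<omega>) (\<lambda>x. ennreal (beta_density (b + 1) a x))"
    by (rule distributed_beta_one_minus)
  have "indep_var borel (\<lambda>\<omega>. 1 - B2 \<omega>) borel (\<lambda>\<omega>. 1 - B1 \<omega> * Z \<omega>)"
    using indep_var_compose[OF indep2, of "\<lambda>x. 1 - x" borel "\<lambda>x. 1 - x" borel] by (simp add: comp_def)
  then have "distributed M lborel (\<lambda>\<omega>. (1 - B2 \<omega>) * (1 - B1 \<omega> * Z \<omega>))
      (\<lambda>x. ennreal (beta_density b (a + 1) x))"
    by (rule distributed_beta_mult[OF b a _ distributed_beta_one_minus[OF B2] W])
  then have "distributed M lborel (\<lambda>\<omega>. 1 - (1 - B2 \<omega>) * (1 - B1 \<omega> * Z \<omega>))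
      (\<lambda>x. ennreal (beta_density (a + 1) b x))"
    by (rule distributed_beta_one_minus)
  moreover have "(\<lambda>\<omega>. 1 - (1 - B2 \<omega>) * (1 - B1 \<omega> * Z \<omega>)) = (\<lambda>\<omega>. B1 \<omega> * (1 - B2 \<omega>) * Z \<omega> + B2 \<omega>)"
    by (simp add: fun_eq_iff algebra_simps)
  ultimately show ?thesis
    by simp
qed

lemma (in prob_space) indep_var_from_indep_vars:
  assumes "indep_vars M' X I" and "A \<inter> B = {}" "A \<subseteq> I" "B \<subseteq> I"
    and "f \<in> measurable (PiM A M') N1" "g \<in> measurable (PiM B M') N2"
    and "\<And>\<omega>. F \<omega> = f (restrict (\<lambda>i. X i \<omega>) A)" "\<And>\<omega>. G \<omega> = g (restrict (\<lambda>i. X i \<omega>) B)"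
  shows "indep_var N1 F N2 G"
proof -
  have "F = f \<circ> (\<lambda>\<omega>. restrict (\<lambda>i. X i \<omega>) A)" "G = g \<circ> (\<lambda>\<omega>. restrict (\<lambda>i. X i \<omega>) B)"
    using assms(7,8) by (simp_all add: fun_eq_iff)
  then show ?thesis
    using indep_var_compose[OF indep_var_restrict[OF assms(1-4)] assms(5,6)] by simp
qed

definition chain_indices :: "nat \<Rightarrow> chain_idx set" where
  "chain_indices t = {Init} \<union> Step1 ` {1..t} \<union> Step2 ` {1..t}"

lemma chain_indices_0: "chain_indices 0 = {Init}"
  by (simp add: chain_indices_def)

lemma chain_indices_Suc:
  "chain_indices (Suc t) = insert (Step1 (Suc t)) (insert (Step2 (Suc t)) (chain_indices t))"
  by (auto simp: chain_indices_def atLeastAtMostSuc_conv)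

abbreviation coordinate_chain :: "nat \<Rightarrow> (chain_idx \<Rightarrow> real) \<Rightarrow> real" where
  "coordinate_chain \<equiv> beta_chain (\<lambda>h. h Init) (\<lambda>s h. h (Step1 s)) (\<lambda>s h. h (Step2 s))"

lemma beta_chain_eq_coordinate_chain:
  assumes "chain_indices t \<subseteq> K"
  shows "beta_chain Z0 B1 B2 t \<omega> = coordinate_chain t (restrict (\<lambda>i. case_chain_idx Z0 B1 B2 i \<omega>) K)"
  using assms by (induction t) (auto simp: chain_indices_0 chain_indices_Suc)

lemma measurable_coordinate_chain:
  assumes "chain_indices t \<subseteq> K"
  shows "coordinate_chain t \<in> borel_measurable (PiM K (\<lambda>_. borel))"
  using assms
proof (induction t)
  case 0
  then show ?case
    by (simp add: chain_indices_0)
next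
  case (Suc t)
  then have [measurable]: "coordinate_chain t \<in> borel_measurable (PiM K (\<lambda>_. borel))"
      and "Step1 (Suc t) \<in> K" "Step2 (Suc t) \<in> K"
    by (auto simp: chain_indices_Suc)
  then show ?case
    by simp measurable
qed

lemma (in prob_space) indep_var_beta_chain:
  assumes indep: "indep_vars (\<lambda>_. borel) (case_chain_idx Z0 B1 B2)
      ({Init} \<union> Step1 ` {1..} \<union> Step2 ` {1..})"
  shows "indep_var borel (B1 (Suc t)) borel (beta_chain Z0 B1 B2 t)"
    and "indep_var borel (B2 (Suc t)) borel (\<lambda>\<omega>. B1 (Suc t) \<omega> * beta_chain Z0 B1 B2 t \<omega>)"
proof -
  have past: "chain_indices t \<subseteq> {Init} \<union> Step1 ` {1..} \<union> Step2 ` {1..}"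
      "Step1 (Suc t) \<notin> chain_indices t" "Step2 (Suc t) \<notin> chain_indices t"
    by (auto simp: chain_indices_def)
  show "indep_var borel (B1 (Suc t)) borel (beta_chain Z0 B1 B2 t)"
  proof (rule indep_var_from_indep_vars[OF indep, where A = "{Step1 (Suc t)}" and B = "chain_indices t"
        and f = "\<lambda>h. h (Step1 (Suc t))" and g = "coordinate_chain t"])
    show "coordinate_chain t \<in> borel_measurable (PiM (chain_indices t) (\<lambda>_. borel))"
      by (rule measurable_coordinate_chain) simp
    show "beta_chain Z0 B1 B2 t \<omega> =
        coordinate_chain t (restrict (\<lambda>i. case_chain_idx Z0 B1 B2 i \<omega>) (chain_indices t))" for \<omega>
      by (rule beta_chain_eq_coordinate_chain) simp
  qed (use past in simp_all)
  let ?K = "insert (Step1 (Suc t)) (chain_indices t)"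
  have past_Step1: "chain_indices t \<subseteq> ?K"
    by blast
  show "indep_var borel (B2 (Suc t)) borel (\<lambda>\<omega>. B1 (Suc t) \<omega> * beta_chain Z0 B1 B2 t \<omega>)"
  proof (rule indep_var_from_indep_vars[OF indep, where A = "{Step2 (Suc t)}" and B = ?K
        and f = "\<lambda>h. h (Step2 (Suc t))" and g = "\<lambda>h. h (Step1 (Suc t)) * coordinate_chain t h"])
    have [measurable]: "coordinate_chain t \<in> borel_measurable (PiM ?K (\<lambda>_. borel))"
      by (rule measurable_coordinate_chain[OF past_Step1])
    show "(\<lambda>h. h (Step1 (Suc t)) * coordinate_chain t h) \<in> borel_measurable (PiM ?K (\<lambda>_. borel))"
      by measurable
    show "B1 (Suc t) \<omega> * beta_chain Z0 B1 B2 t \<omega> =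
        (\<lambda>h. h (Step1 (Suc t)) * coordinate_chain t h) (restrict (\<lambda>i. case_chain_idx Z0 B1 B2 i \<omega>) ?K)" for \<omega>
      by (subst beta_chain_eq_coordinate_chain[OF past_Step1]) simp
  qed (use past in simp_all)
qed

lemma (in prob_space) distributed_beta_chain:
  fixes a b :: real
  assumes a: "0 < a" and b: "0 < b"
    and Z0: "distributed M lborel Z0 (\<lambda>x. ennreal (beta_density (a + 1) b x))"
    and B1: "\<And>t. 1 \<le> t \<Longrightarrow> distributed M lborel (B1 t) (\<lambda>x. ennreal (beta_density a 1 x))"
    and B2: "\<And>t. 1 \<le> t \<Longrightarrow> distributed M lborel (B2 t) (\<lambda>x. ennreal (beta_density 1 b x))"
    and indep: "indep_vars (\<lambda>_. borel) (case_chain_idx Z0 B1 B2)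
      ({Init} \<union> Step1 ` {1..} \<union> Step2 ` {1..})"
  shows "distributed M lborel (beta_chain Z0 B1 B2 t) (\<lambda>x. ennreal (beta_density (a + 1) b x))"
proof (induction t)
  case 0
  then show ?case
    using Z0 by simp
next
  case (Suc t)
  show ?case
    using distributed_beta_step[OF a b Suc.IH B1 B2 indep_var_beta_chain[OF indep]] by simp
qed

theorem mainTheorem1:
  fixes N1 N2 :: nat and M :: "'a measure"
  assumes "prob_space M" and "N1 \<ge> 1" and "N2 \<ge> 1"
  shows
   "(\<forall>Z B1 B2 :: 'a \<Rightarrow> real.
       distributed M lborel Z (\<lambda>x. ennreal (beta_density (real N1 + 1) (real N2) x)) \<and>
       distributed M lborel B1 (\<lambda>x. ennreal (beta_density (real N1) 1 x)) \<and>
       distributed M lborel B2 (\<lambda>x. ennreal (beta_density 1 (real N2) x)) \<and>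
       prob_space.indep_vars M (\<lambda>_. borel)
         (\<lambda>i::nat. if i = 0 then Z else if i = 1 then B1 else B2) {0, 1, 2}
     \<longrightarrow> distributed M lborel (\<lambda>\<omega>. B1 \<omega> * (1 - B2 \<omega>) * Z \<omega> + B2 \<omega>)
           (\<lambda>x. ennreal (beta_density (real N1 + 1) (real N2) x)))
    \<and>
    (\<forall>(Z0 :: 'a \<Rightarrow> real) (B1 :: nat \<Rightarrow> 'a \<Rightarrow> real) (B2 :: nat \<Rightarrow> 'a \<Rightarrow> real).
       distributed M lborel Z0 (\<lambda>x. ennreal (beta_density (real N1 + 1) (real N2) x)) \<and>
       (\<forall>t\<ge>1. distributed M lborel (B1 t) (\<lambda>x. ennreal (beta_density (real N1) 1 x))) \<and>
       (\<forall>t\<ge>1. distributed M lborel (B2 t) (\<lambda>x. ennreal (beta_density 1 (real N2) x))) \<and>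
       prob_space.indep_vars M (\<lambda>_. borel)
         (\<lambda>i. case i of Init \<Rightarrow> Z0 | Step1 t \<Rightarrow> B1 t | Step2 t \<Rightarrow> B2 t)
         ({Init} \<union> Step1 ` {1..} \<union> Step2 ` {1..})
     \<longrightarrow> (\<forall>t. distributed M lborel (beta_chain Z0 B1 B2 t)
               (\<lambda>x. ennreal (beta_density (real N1 + 1) (real N2) x))))"
proof -
  interpret prob_space M by fact
  have pos: "0 < real N1" "0 < real N2"
    using assms by simp_all
  have "distributed M lborel (\<lambda>\<omega>. B1 \<omega> * (1 - B2 \<omega>) * Z \<omega> + B2 \<omega>)
      (\<lambda>x. ennreal (beta_density (real N1 + 1) (real N2) x))"
    if Z: "distributed M lborel Z (\<lambda>x. ennreal (beta_density (real N1 + 1) (real N2) x))"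
      and B1: "distributed M lborel B1 (\<lambda>x. ennreal (beta_density (real N1) 1 x))"
      and B2: "distributed M lborel B2 (\<lambda>x. ennreal (beta_density 1 (real N2) x))"
      and indep: "indep_vars (\<lambda>_. borel) (\<lambda>i::nat. if i = 0 then Z else if i = 1 then B1 else B2) {0, 1, 2}"
    for Z B1 B2 :: "'a \<Rightarrow> real"
  proof (rule distributed_beta_step[OF pos Z B1 B2])
    show "indep_var borel B1 borel Z"
      by (rule indep_var_from_indep_vars[OF indep, where A = "{1}" and B = "{0}"
            and f = "\<lambda>h. h 1" and g = "\<lambda>h. h 0"]) auto
    show "indep_var borel B2 borel (\<lambda>\<omega>. B1 \<omega> * Z \<omega>)"
      by (rule indep_var_from_indep_vars[OF indep, where A = "{2}" and B = "{0, 1}"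
            and f = "\<lambda>h. h 2" and g = "\<lambda>h. h 1 * h 0"]) auto
  qed
  then show ?thesis
    using distributed_beta_chain[OF pos] by auto
qed

end
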